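(* Let $q$ be a prime power, let $m$ be a divisor of $n$ and set $s=n/m$. Let $\mathcal{F}$ be a flag of type $(ms_1,\ldots,ms_r)$ on $\mathbb{F}_{q^n}$ (with $1\le s_1<\cdots<s_r<s$) whose best friend is the subfield $\mathbb{F}_{q^m}$, and let $\beta\in\mathbb{F}_{q^n}^*$. Then $d_f(\mathrm{Orb}_\beta(\mathcal{F}))=0$ if and only if $\beta\in\mathbb{F}_{q^m}^*$. If $\beta\notin\mathbb{F}_{q^m}^*$, then $2m$ divides $d_f(\mathrm{Orb}_\beta(\mathcal{F}))$ and $$2m\le d_f(\mathrm{Orb}_\beta(\mathcal{F}))\le 2m\left(\sum_{s_i\le\lfloor s/2\rfloor}s_i+\sum_{s_i>\lfloor s/2\rfloor}(s-s_i)\right).$$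
   Context: A flag of type $(t_1,\ldots,t_r)$ on $\mathbb{F}_{q^n}$ is a sequence $(\mathcal{F}_1,\ldots,\mathcal{F}_r)$ of $\mathbb{F}_q$-subspaces with $\{0\}\subsetneq\mathcal{F}_1\subsetneq\cdots\subsetneq\mathcal{F}_r\subsetneq\mathbb{F}_{q^n}$ and $\dim_{\mathbb{F}_q}\mathcal{F}_i=t_i$. For $\beta\in\mathbb{F}_{q^n}^*$ of multiplicative order $|\beta|$, $\mathcal{F}\beta=(\mathcal{F}_1\beta,\ldots,\mathcal{F}_r\beta)$ with $\mathcal{U}\beta=\{u\beta:u\in\mathcal{U}\}$, and $\mathrm{Orb}_\beta(\mathcal{F})=\{\mathcal{F}\beta^j:0\le j\le|\beta|-1\}$. Subspace distance: $d_S(\mathcal{U},\mathcal{V})=\dim(\mathcal{U}+\mathcal{V})-\dim(\mathcal{U}\cap\mathcal{V})$; flag distance: $d_f(\mathcal{F},\mathcal{F}')=\sum_{i=1}^r d_S(\mathcal{F}_i,\mathcal{F}'_i)$. The minimum distance $d_f(\mathcal{C})$ of a set $\mathcal{C}$ of flags is the minimum of $d_f$ over pairs of distinct elements, and $d_f(\mathcal{C})=0$ if $|\mathcal{C}|=1$. A subfield $\mathbb{F}_{q^m}$ is a friend of $\mathcal{F}$ if every $\mathcal{F}_i$ is an $\mathbb{F}_{q^m}$-vector space; the best friend is the largest friend. *)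

theory Defs
  imports Main "HOL-Computational_Algebra.Primes"
begin

text \<open>The ambient field F_{q^n} is a finite field type 'a with CARD('a) = q^n.
  For a divisor d of n, the subfield F_{q^d} is the set of roots of x^(q^d) - x.\<close>

definition subfield_of :: "nat \<Rightarrow> nat \<Rightarrow> 'a::field set" where
  "subfield_of q d = {x. x ^ (q ^ d) = x}"

definition prime_power :: "nat \<Rightarrow> bool" where
  "prime_power q \<longleftrightarrow> (\<exists>p k. prime p \<and> k > 0 \<and> q = p ^ k)"

definition is_subspace :: "'a::field set \<Rightarrow> 'a set \<Rightarrow> bool" where
  "is_subspace K U \<longleftrightarrow> 0 \<in> U \<and> (\<forall>u\<in>U. \<forall>v\<in>U. u + v \<in> U) \<and> (\<forall>k\<in>K. \<forall>u\<in>U. k * u \<in> U)"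

definition span_over :: "'a::field set \<Rightarrow> 'a set \<Rightarrow> 'a set" where
  "span_over K S = {y. \<exists>c. (\<forall>v\<in>S. c v \<in> K) \<and> y = (\<Sum>v\<in>S. c v * v)}"

definition lin_indep_over :: "'a::field set \<Rightarrow> 'a set \<Rightarrow> bool" where
  "lin_indep_over K S \<longleftrightarrow> finite S \<and>
     (\<forall>c. (\<forall>v\<in>S. c v \<in> K) \<longrightarrow> (\<Sum>v\<in>S. c v * v) = 0 \<longrightarrow> (\<forall>v\<in>S. c v = 0))"

definition is_basis_over :: "'a::field set \<Rightarrow> 'a set \<Rightarrow> 'a set \<Rightarrow> bool" where
  "is_basis_over K U B \<longleftrightarrow> B \<subseteq> U \<and> finite B \<and> lin_indep_over K B \<and> span_over K B = U"

definition dim_over :: "'a::field set \<Rightarrow> 'a set \<Rightarrow> nat" where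
  "dim_over K U = card (SOME B. is_basis_over K U B)"

definition set_plus :: "'a::field set \<Rightarrow> 'a set \<Rightarrow> 'a set" where
  "set_plus U V = {u + v | u v. u \<in> U \<and> v \<in> V}"

definition subspace_dist :: "nat \<Rightarrow> 'a::field set \<Rightarrow> 'a set \<Rightarrow> nat" where
  "subspace_dist q U V =
     dim_over (subfield_of q 1) (set_plus U V) - dim_over (subfield_of q 1) (U \<inter> V)"

definition is_flag :: "nat \<Rightarrow> nat list \<Rightarrow> 'a::field set list \<Rightarrow> bool" where
  "is_flag q t F \<longleftrightarrow> length F = length t \<and>
     (\<forall>i < length F. is_subspace (subfield_of q 1) (F ! i)
                    \<and> dim_over (subfield_of q 1) (F ! i) = t ! i) \<and>
     (length F > 0 \<longrightarrow> {0} \<subset> F ! 0 \<and> F ! (length F - 1) \<subset> UNIV) \<and>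
     (\<forall>i. Suc i < length F \<longrightarrow> F ! i \<subset> F ! Suc i)"

definition flag_dist :: "nat \<Rightarrow> 'a::field set list \<Rightarrow> 'a set list \<Rightarrow> nat" where
  "flag_dist q F G = (\<Sum>i < length F. subspace_dist q (F ! i) (G ! i))"

definition min_flag_dist :: "nat \<Rightarrow> 'a::field set list set \<Rightarrow> nat" where
  "min_flag_dist q C =
     (if \<exists>a\<in>C. \<exists>b\<in>C. a \<noteq> b
      then Min {flag_dist q a b | a b. a \<in> C \<and> b \<in> C \<and> a \<noteq> b} else 0)"

definition is_friend :: "nat \<Rightarrow> nat \<Rightarrow> nat \<Rightarrow> 'a::field set list \<Rightarrow> bool" where
  "is_friend q n d F \<longleftrightarrow> d dvd n \<and> (\<forall>i < length F. is_subspace (subfield_of q d) (F ! i))"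

definition is_best_friend :: "nat \<Rightarrow> nat \<Rightarrow> nat \<Rightarrow> 'a::field set list \<Rightarrow> bool" where
  "is_best_friend q n m F \<longleftrightarrow> is_friend q n m F \<and> (\<forall>d. is_friend q n d F \<longrightarrow> d \<le> m)"

definition mult_order :: "'a::field \<Rightarrow> nat" where
  "mult_order b = (LEAST k. k > 0 \<and> b ^ k = 1)"

definition orbit :: "'a::field \<Rightarrow> 'a set list \<Rightarrow> 'a set list set" where
  "orbit b F = {map (\<lambda>U. (\<lambda>u. u * b ^ j) ` U) F | j. j \<le> mult_order b - 1}"

end

theory Submission
  imports Defs "HOL-Number_Theory.Residues" "HOL-Computational_Algebra.Polynomial"
    "HOL-Library.FuncSet" "HOL-Library.Cardinality"
begin

text \<open>Multiplying a flag by a nonzero field element preserves the F_{q^m}-dimension of each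
  subspace, so any two flags of the orbit are sequences of F_{q^m}-subspaces of F_{q^m}-dimensions
  s_i. For two such subspaces U and V the F_q-distance is m times 2 (s_i - dim (U \<inter> V)), and
  s_i - dim (U \<inter> V) is at most min s_i (s - s_i) because U + V lies in the s-dimensional
  F_{q^m}-space. Hence all distances in the orbit are multiples of 2m, nonzero ones are at least 2m,
  and the distance between F and F\<beta> bounds the minimum from above. The orbit is trivial iff \<beta>
  stabilizes every F_i; the stabilizer of F is a subfield containing F_{q^m} over which every F_i is
  a vector space, i.e. a friend of F, so by maximality it is F_{q^m} itself.\<close>

section \<open>Linear algebra over a subfield\<close>

definition is_subfield :: "'a::field set \<Rightarrow> bool" where
  "is_subfield K \<longleftrightarrow> 0 \<in> K \<and> 1 \<in> K \<and> (\<forall>x\<in>K. \<forall>y\<in>K. x + y \<in> K \<and> x * y \<in> K)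
     \<and> (\<forall>x\<in>K. - x \<in> K) \<and> (\<forall>x\<in>K. x \<noteq> 0 \<longrightarrow> inverse x \<in> K)"

lemma is_subspace_sum:
  assumes "is_subspace K U" "finite S" "S \<subseteq> U" "\<forall>v\<in>S. c v \<in> K"
  shows "(\<Sum>v\<in>S. c v * v) \<in> U"
  using assms(2-4)
  by (induction S rule: finite_induct) (use assms(1) in \<open>auto simp: is_subspace_def\<close>)

lemma is_subspace_uminus:
  assumes "is_subfield K" "is_subspace K U" "u \<in> U"
  shows "- u \<in> U"
proof -
  have "(- 1) * u \<in> U" using assms unfolding is_subfield_def is_subspace_def by blast
  then show ?thesis by simp
qed

lemma is_subspace_diff:
  assumes "is_subfield K" "is_subspace K U" "u \<in> U" "v \<in> U"
  shows "u - v \<in> U"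
  using assms is_subspace_uminus[OF assms(1,2,4)] unfolding is_subspace_def
  by (metis diff_conv_add_uminus)

lemma is_subspace_set_plus:
  assumes "is_subspace K U" "is_subspace K V"
  shows "is_subspace K (set_plus U V)"
  unfolding is_subspace_def set_plus_def
proof (intro conjI ballI)
  show "0 \<in> {u + v |u v. u \<in> U \<and> v \<in> V}"
    using assms by (force simp: is_subspace_def)
next
  fix x y assume "x \<in> {u + v |u v. u \<in> U \<and> v \<in> V}" "y \<in> {u + v |u v. u \<in> U \<and> v \<in> V}"
  then obtain u v u' v' where "u \<in> U" "v \<in> V" "u' \<in> U" "v' \<in> V" "x = u + v" "y = u' + v'"
    by blast
  moreover have "u + v + (u' + v') = (u + u') + (v + v')" by (simp add: algebra_simps)
  ultimately show "x + y \<in> {u + v |u v. u \<in> U \<and> v \<in> V}"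
    using assms unfolding is_subspace_def by blast
next
  fix k x assume "k \<in> K" "x \<in> {u + v |u v. u \<in> U \<and> v \<in> V}"
  then obtain u v where "u \<in> U" "v \<in> V" "x = u + v" by blast
  moreover have "k * (u + v) = k * u + k * v" by (simp add: algebra_simps)
  ultimately show "k * x \<in> {u + v |u v. u \<in> U \<and> v \<in> V}"
    using assms \<open>k \<in> K\<close> unfolding is_subspace_def by blast
qed

lemma is_subspace_Int: "is_subspace K U \<Longrightarrow> is_subspace K V \<Longrightarrow> is_subspace K (U \<inter> V)"
  unfolding is_subspace_def by blast

lemma is_subspace_subfield_mono: "is_subspace K U \<Longrightarrow> L \<subseteq> K \<Longrightarrow> is_subspace L U"
  unfolding is_subspace_def by blast

lemma is_subspace_scale:
  assumes "is_subspace K U"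
  shows "is_subspace K ((\<lambda>u. u * c) ` U)"
  unfolding is_subspace_def
proof (intro conjI ballI)
  show "0 \<in> (\<lambda>u. u * c) ` U" using assms unfolding is_subspace_def by force
next
  fix x y assume "x \<in> (\<lambda>u. u * c) ` U" "y \<in> (\<lambda>u. u * c) ` U"
  then obtain u v where "u \<in> U" "v \<in> U" "x = u * c" "y = v * c" by blast
  moreover from this have "u + v \<in> U" using assms unfolding is_subspace_def by blast
  moreover have "x + y = (u + v) * c" using \<open>x = u * c\<close> \<open>y = v * c\<close> by (simp add: distrib_right)
  ultimately show "x + y \<in> (\<lambda>u. u * c) ` U" by blast
next
  fix k x assume "k \<in> K" "x \<in> (\<lambda>u. u * c) ` U"
  then obtain u where "u \<in> U" "x = u * c" by blast
  moreover from this have "k * u \<in> U" using assms \<open>k \<in> K\<close> unfolding is_subspace_def by blast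
  moreover have "k * x = (k * u) * c" using \<open>x = u * c\<close> by (simp add: mult.assoc)
  ultimately show "k * x \<in> (\<lambda>u. u * c) ` U" by blast
qed

lemma in_span_over:
  assumes "is_subfield K" "finite B" "v \<in> B"
  shows "v \<in> span_over K B"
proof -
  let ?c = "\<lambda>u. if u = v then (1::'a) else 0"
  have "(\<Sum>u\<in>B. ?c u * u) = v"
    using assms(2,3) by (simp add: sum.delta' if_distrib[of "\<lambda>c. c * _"] cong: if_cong)
  moreover have "\<forall>u\<in>B. ?c u \<in> K" using assms(1) by (simp add: is_subfield_def)
  ultimately show ?thesis unfolding span_over_def by (intro CollectI exI[of _ ?c]) auto
qed

lemma lin_indep_over_insert:
  assumes K: "is_subfield K" and ind: "lin_indep_over K B" and w: "w \<notin> span_over K B"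
  shows "lin_indep_over K (insert w B)"
  unfolding lin_indep_over_def
proof (intro conjI allI impI)
  have fin: "finite B" using ind by (simp add: lin_indep_over_def)
  then show "finite (insert w B)" by simp
  have wB: "w \<notin> B" using in_span_over[OF K fin] w by blast
  fix c assume cK: "\<forall>v\<in>insert w B. c v \<in> K" and "(\<Sum>v\<in>insert w B. c v * v) = 0"
  then have sum0: "c w * w + (\<Sum>v\<in>B. c v * v) = 0" using fin wB by simp
  have cw: "c w = 0"
  proof (rule ccontr)
    assume nz: "c w \<noteq> 0"
    let ?d = "\<lambda>v. - inverse (c w) * c v"
    have "w = inverse (c w) * (c w * w)" using nz by simp
    also have "c w * w = - (\<Sum>v\<in>B. c v * v)" using sum0 by (simp add: eq_neg_iff_add_eq_0)
    finally have "w = (\<Sum>v\<in>B. ?d v * v)"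
      by (simp add: sum_distrib_left mult.assoc sum_negf)
    moreover have "\<forall>v\<in>B. ?d v \<in> K" using K cK nz by (simp add: is_subfield_def)
    ultimately have "w \<in> span_over K B"
      unfolding span_over_def by (intro CollectI exI[of _ ?d]) auto
    then show False using w by blast
  qed
  then have "(\<Sum>v\<in>B. c v * v) = 0" using sum0 by simp
  then show "\<forall>v\<in>insert w B. c v = 0" using ind cK cw unfolding lin_indep_over_def by blast
qed

lemma basis_over_exists:
  assumes K: "is_subfield K" and U: "is_subspace K U" "finite U"
  shows "\<exists>B. is_basis_over K U B"
proof -
  define I where "I = {B. B \<subseteq> U \<and> lin_indep_over K B}"
  have "finite I" unfolding I_def using U(2) by simp
  moreover have "{} \<in> I" unfolding I_def lin_indep_over_def by simp
  ultimately obtain B where BI: "B \<in> I" and "card B = Max (card ` I)"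
    using Max_in[of "card ` I"] by (metis empty_iff finite_imageI imageE image_is_empty)
  with \<open>finite I\<close> have maxB: "\<And>C. C \<in> I \<Longrightarrow> card C \<le> card B" by simp
  have BU: "B \<subseteq> U" and ind: "lin_indep_over K B" using BI by (auto simp: I_def)
  have fin: "finite B" using ind by (simp add: lin_indep_over_def)
  have "U \<subseteq> span_over K B"
  proof
    fix w assume wU: "w \<in> U"
    show "w \<in> span_over K B"
    proof (rule ccontr)
      assume nw: "w \<notin> span_over K B"
      then have "insert w B \<in> I" using lin_indep_over_insert[OF K ind nw] wU BU by (simp add: I_def)
      moreover have "w \<notin> B" using nw in_span_over[OF K fin] by blast
      ultimately show False using maxB[of "insert w B"] fin by simp
    qed
  qed
  moreover have "span_over K B \<subseteq> U"
    unfolding span_over_def using is_subspace_sum[OF U(1) fin BU] by blast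
  ultimately show ?thesis using BU fin ind unfolding is_basis_over_def by blast
qed

lemma card_eq_card_power_card_basis:
  assumes K: "is_subfield K" and B: "is_basis_over K U B"
  shows "card U = card K ^ card B"
proof -
  have fin: "finite B" and ind: "lin_indep_over K B" and sp: "span_over K B = U"
    using B by (auto simp: is_basis_over_def)
  let ?f = "\<lambda>c. \<Sum>v\<in>B. c v * v"
  have "inj_on ?f (B \<rightarrow>\<^sub>E K)"
  proof (rule inj_onI)
    fix c c' assume c: "c \<in> B \<rightarrow>\<^sub>E K" and c': "c' \<in> B \<rightarrow>\<^sub>E K" and "?f c = ?f c'"
    then have "(\<Sum>v\<in>B. (c v - c' v) * v) = 0"
      by (simp add: left_diff_distrib sum_subtractf)
    moreover have "\<forall>v\<in>B. c v - c' v \<in> K"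
    proof
      fix v assume "v \<in> B"
      then have "c v \<in> K" "c' v \<in> K" using c c' by auto
      then have "c v + - c' v \<in> K" using K unfolding is_subfield_def by blast
      then show "c v - c' v \<in> K" by simp
    qed
    ultimately have "\<forall>v\<in>B. c v - c' v = 0"
      using ind unfolding lin_indep_over_def by (elim conjE allE[of _ "\<lambda>v. c v - c' v"]) blast
    then show "c = c'" using c c' by (intro PiE_ext) auto
  qed
  moreover have "?f ` (B \<rightarrow>\<^sub>E K) = U"
  proof
    show "?f ` (B \<rightarrow>\<^sub>E K) \<subseteq> U" using sp unfolding span_over_def by blast
    show "U \<subseteq> ?f ` (B \<rightarrow>\<^sub>E K)"
    proof
      fix y assume "y \<in> U"
      then obtain c where "\<forall>v\<in>B. c v \<in> K" "y = ?f c"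
        using sp unfolding span_over_def by blast
      then have "restrict c B \<in> B \<rightarrow>\<^sub>E K" "y = ?f (restrict c B)" by auto
      then show "y \<in> ?f ` (B \<rightarrow>\<^sub>E K)" by blast
    qed
  qed
  ultimately have "card (B \<rightarrow>\<^sub>E K) = card U" by (simp add: card_image[symmetric])
  then show ?thesis using fin by (simp add: card_PiE)
qed

lemma card_eq_card_power_dim_over:
  assumes "is_subfield K" "is_subspace K U" "finite U"
  shows "card U = card K ^ dim_over K U"
proof -
  have "is_basis_over K U (SOME B. is_basis_over K U B)"
    using basis_over_exists[OF assms] by (rule someI_ex)
  then show ?thesis unfolding dim_over_def by (rule card_eq_card_power_card_basis[OF assms(1)])
qed

lemma card_set_plus_mult_card_Int:
  fixes U V :: "'a::{finite,field} set"
  assumes K: "is_subfield K" and U: "is_subspace K U" and V: "is_subspace K V"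
  shows "card (set_plus U V) * card (U \<inter> V) = card U * card V"
proof -
  define fibre where "fibre w = {(u, v). u \<in> U \<and> v \<in> V \<and> u + v = w}" for w
  have card_fibre: "card (fibre w) = card (U \<inter> V)" if w: "w \<in> set_plus U V" for w
  proof -
    obtain u0 v0 where uv0: "u0 \<in> U" "v0 \<in> V" "w = u0 + v0"
      using w unfolding set_plus_def by blast
    have "bij_betw (\<lambda>t. (u0 + t, v0 - t)) (U \<inter> V) (fibre w)"
    proof (rule bij_betw_byWitness[where f' = "\<lambda>(u, v). u - u0"])
      show "(\<lambda>t. (u0 + t, v0 - t)) ` (U \<inter> V) \<subseteq> fibre w"
        using uv0 U V unfolding fibre_def is_subspace_def
        by (auto intro: is_subspace_diff[OF K V])
      show "(\<lambda>(u, v). u - u0) ` fibre w \<subseteq> U \<inter> V"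
      proof clarify
        fix u v assume "(u, v) \<in> fibre w"
        then have "u \<in> U" "v \<in> V" "u - u0 = v0 - v"
          using uv0 by (auto simp: fibre_def algebra_simps)
        then show "u - u0 \<in> U \<inter> V"
          using is_subspace_diff[OF K U _ uv0(1)] is_subspace_diff[OF K V uv0(2)] by (metis IntI)
      qed
    qed (auto simp: fibre_def uv0(3) algebra_simps)
    then show ?thesis by (simp add: bij_betw_same_card)
  qed
  have "U \<times> V = (\<Union>w\<in>set_plus U V. fibre w)"
    unfolding fibre_def set_plus_def by auto
  then have "card (U \<times> V) = (\<Sum>w\<in>set_plus U V. card (fibre w))"
    by (simp add: card_UN_disjoint fibre_def disjoint_iff)
  also have "\<dots> = card (set_plus U V) * card (U \<inter> V)" using card_fibre by simp
  finally show ?thesis by (simp add: card_cartesian_product)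
qed

lemma card_subfield_gt_1:
  assumes "is_subfield K" "finite K"
  shows "1 < card K"
proof -
  have "{0, 1} \<subseteq> K" using assms(1) by (simp add: is_subfield_def)
  then have "card {0, 1::'a} \<le> card K" using assms(2) by (rule card_mono[rotated])
  then show ?thesis by simp
qed

lemma dim_over_le_iff_card_le:
  fixes U V :: "'a::{finite,field} set"
  assumes K: "is_subfield K" and "is_subspace K U" "is_subspace K V"
  shows "dim_over K U \<le> dim_over K V \<longleftrightarrow> card U \<le> card V"
proof -
  have "card U = card K ^ dim_over K U" "card V = card K ^ dim_over K V"
    using assms card_eq_card_power_dim_over[OF K] by auto
  then show ?thesis using card_subfield_gt_1[OF K] by simp
qed

lemma dim_over_set_plus_Int:
  fixes U V :: "'a::{finite,field} set"
  assumes K: "is_subfield K" and U: "is_subspace K U" and V: "is_subspace K V"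
  shows "dim_over K (set_plus U V) + dim_over K (U \<inter> V) = dim_over K U + dim_over K V"
proof -
  have card_eq: "card W = card K ^ dim_over K W" if "is_subspace K W" for W :: "'a set"
    using card_eq_card_power_dim_over[OF K that] by simp
  have "card K ^ (dim_over K (set_plus U V) + dim_over K (U \<inter> V))
      = card (set_plus U V) * card (U \<inter> V)"
    using U V by (simp add: power_add card_eq is_subspace_set_plus is_subspace_Int)
  also have "\<dots> = card K ^ (dim_over K U + dim_over K V)"
    using card_set_plus_mult_card_Int[OF K U V] U V by (simp add: power_add card_eq)
  finally show ?thesis using card_subfield_gt_1[OF K] by simp
qed

section \<open>Subfields of a finite field\<close>

lemma CARD_field_ge_2: "2 \<le> CARD('a::{finite,field})"
  using card_subfield_gt_1[of "UNIV :: 'a set"] by (simp add: is_subfield_def)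

lemma prime_CHAR_finite_field: "prime CHAR('a::{finite,field})"
  by (intro prime_CHAR_semidom finite_imp_CHAR_pos) simp

lemma prime_power_CARD_eq_CHAR_power:
  assumes "prime_power q" "CARD('a::{finite,field}) = q ^ n"
  obtains k where "q = CHAR('a) ^ k"
proof -
  obtain p k where p: "prime p" and q: "q = p ^ k"
    using assms(1) unfolding prime_power_def by blast
  have "CHAR('a) dvd p ^ (k * n)"
    using CHAR_dvd_CARD[where 'a = 'a] assms(2) q by (simp add: power_mult)
  then have "CHAR('a) dvd p" by (rule prime_dvd_power[OF prime_CHAR_finite_field])
  then have "CHAR('a) = p" by (rule primes_dvd_imp_eq[OF prime_CHAR_finite_field p])
  then show ?thesis using q that by blast
qed

lemma is_subfield_Frobenius_fixed_points:
  assumes "prime CHAR('a::field)" "Q = CHAR('a) ^ j"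
  shows "is_subfield {x::'a. x ^ Q = x}"
  unfolding is_subfield_def
proof (intro conjI ballI impI)
  have "Q > 0" using assms by (simp add: prime_gt_0_nat)
  then show "(0::'a) \<in> {x. x ^ Q = x}" by simp
  fix x :: 'a assume x: "x \<in> {x. x ^ Q = x}"
  have "x ^ Q + (- x) ^ Q = 0"
    using freshmans_dream'[OF assms, of x "- x"] \<open>Q > 0\<close> by (simp add: zero_power)
  then show "- x \<in> {x. x ^ Q = x}" using x by (simp add: add_eq_0_iff2 minus_equation_iff)
  show "x \<noteq> 0 \<Longrightarrow> inverse x \<in> {x. x ^ Q = x}" using x by (simp add: power_inverse)
  fix y :: 'a assume y: "y \<in> {x. x ^ Q = x}"
  show "x + y \<in> {x. x ^ Q = x}" using x y freshmans_dream'[OF assms] by simp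
  show "x * y \<in> {x. x ^ Q = x}" using x y by (simp add: power_mult_distrib)
qed simp

lemma is_subfield_subfield_of:
  assumes "prime_power q" "CARD('a::{finite,field}) = q ^ n"
  shows "is_subfield (subfield_of q d :: 'a set)"
proof -
  obtain k where "q = CHAR('a) ^ k" using assms by (rule prime_power_CARD_eq_CHAR_power)
  then have "q ^ d = CHAR('a) ^ (k * d)" by (simp add: power_mult)
  then show ?thesis unfolding subfield_of_def
    by (intro is_subfield_Frobenius_fixed_points prime_CHAR_finite_field)
qed

lemma subfield_of_1_subset: "subfield_of q 1 \<subseteq> subfield_of q m"
proof
  fix x :: 'a assume x: "x \<in> subfield_of q 1"
  have "x ^ (q ^ j) = x" for j
  proof (induction j)
    case (Suc j)
    have "x ^ (q ^ Suc j) = (x ^ (q ^ j)) ^ q" by (simp add: power_mult[symmetric] mult.commute)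
    then show ?case using Suc x by (simp add: subfield_of_def)
  qed simp
  then show "x \<in> subfield_of q m" by (simp add: subfield_of_def)
qed

lemma power_card_eq_1_if_mult_closed:
  fixes A :: "'a::field set"
  assumes "finite A" "0 \<notin> A" "\<forall>x\<in>A. \<forall>y\<in>A. x * y \<in> A" "x \<in> A"
  shows "x ^ card A = 1"
proof -
  have inj: "inj_on ((*) x) A" using assms(2,4) by (auto simp: inj_on_def)
  then have "(*) x ` A = A"
    using assms by (intro endo_inj_surj) auto
  then have "prod id A = prod ((*) x) A" using prod.reindex[OF inj, of id] by simp
  also have "\<dots> = x ^ card A * prod id A" by (simp add: prod.distrib)
  finally show ?thesis using assms(1,2) by (auto simp: prod_zero_iff)
qed

lemma power_CARD_minus_1:
  fixes x :: "'a::{finite,field}"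
  assumes "x \<noteq> 0"
  shows "x ^ (CARD('a) - 1) = 1"
  using power_card_eq_1_if_mult_closed[of "UNIV - {0}" x] assms
  by (simp add: card_Diff_singleton)

lemma card_roots_of_unity:
  fixes M :: nat
  assumes M: "0 < M" "M dvd CARD('a::{finite,field}) - 1"
  shows "card {x::'a. x ^ M = 1} = M"
proof -
  \<comment> \<open>Every unit is a root of X^M - 1 or of h = (\<Sum>i<S. X^(M i)), whose product is
    X^(M S) - 1; the degrees M and M (S - 1) then leave at least M roots for X^M - 1.\<close>
  obtain S where S: "CARD('a) - 1 = M * S" using M(2) by blast
  with CARD_field_ge_2[where 'a = 'a] have "0 < S" by (cases S) auto
  define h :: "'a poly" where "h = (\<Sum>i<S. monom 1 (M * i))"
  have poly_h: "poly h x = (\<Sum>i<S. (x ^ M) ^ i)" for x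
    by (simp add: h_def poly_sum poly_monom power_mult)
  have "poly h 0 = 1"
    using \<open>0 < S\<close> M(1) by (simp add: poly_h zero_power power_0_left sum.lessThan_Suc_shift)
  then have "h \<noteq> 0" by auto
  have "degree h \<le> M * (S - 1)"
    unfolding h_def
  proof (intro degree_sum_le)
    fix i assume "i \<in> {..<S}"
    then have "i \<le> S - 1" by auto
    then show "degree (monom (1::'a) (M * i)) \<le> M * (S - 1)" by (simp add: degree_monom_eq)
  qed simp
  then have card_h: "card {x. poly h x = 0} \<le> M * (S - 1)"
    using card_poly_roots_bound[OF \<open>h \<noteq> 0\<close>] by linarith
  define p :: "'a poly" where "p = monom 1 M - 1"
  have poly_p: "poly p x = x ^ M - 1" for x by (simp add: p_def poly_monom)
  have "p \<noteq> 0" using M(1) poly_p[of 0] by (auto simp: zero_power)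
  moreover have "degree p \<le> M"
    unfolding p_def by (intro degree_diff_le) (auto intro: degree_monom_le)
  ultimately have card_p: "card {x::'a. x ^ M = 1} \<le> M"
    using card_poly_roots_bound[of p] by (simp add: poly_p)
  have "UNIV - {0} \<subseteq> {x::'a. x ^ M = 1} \<union> {x. poly h x = 0}"
  proof
    fix x :: 'a assume "x \<in> UNIV - {0}"
    then have "(x ^ M) ^ S - 1 = 0" using power_CARD_minus_1[of x] S by (simp add: power_mult)
    then have "(x ^ M - 1) * poly h x = 0" by (simp add: poly_h power_diff_1_eq)
    then show "x \<in> {x. x ^ M = 1} \<union> {x. poly h x = 0}" by simp
  qed
  then have "CARD('a) - 1 \<le> card ({x::'a. x ^ M = 1} \<union> {x. poly h x = 0})"
    using card_mono[of _ "UNIV - {0::'a}"] by (simp add: card_Diff_singleton)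
  also have "\<dots> \<le> card {x::'a. x ^ M = 1} + M * (S - 1)"
    using card_Un_le card_h by (metis add_left_mono order_trans)
  finally have "M * S \<le> card {x::'a. x ^ M = 1} + M * (S - 1)" using S by simp
  moreover have "M * S = M * (S - 1) + M" using \<open>0 < S\<close> by (cases S) auto
  ultimately show ?thesis using card_p by linarith
qed

lemma one_less_base_if_CARD_eq_power:
  assumes "CARD('a::{finite,field}) = q ^ n" "0 < n"
  shows "1 < q"
proof (rule ccontr)
  assume "\<not> 1 < q"
  then have "q = 0 \<or> q = 1" by auto
  then have "q ^ n \<le> 1" using assms(2) by (auto simp: power_0_left)
  then show False using assms(1) CARD_field_ge_2[where 'a = 'a] by simp
qed

lemma card_power_fixed_points:
  assumes "CARD('a::{finite,field}) = Q ^ k" "0 < k"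
  shows "card {x::'a. x ^ Q = x} = Q"
proof -
  have "1 < Q" using assms by (rule one_less_base_if_CARD_eq_power)
  have "[Q = 1] (mod Q - 1)" using \<open>1 < Q\<close> by (simp add: cong_def mod_if le_mod_geq)
  then have "[Q ^ k = 1] (mod Q - 1)" by (metis cong_pow power_one)
  then have "Q - 1 dvd CARD('a) - 1" using assms(1) cong_to_1_nat by simp
  then have card_units: "card {x::'a. x ^ (Q - 1) = 1} = Q - 1"
    using \<open>1 < Q\<close> by (intro card_roots_of_unity) auto
  have "{x::'a. x ^ Q = x} = insert 0 {x. x ^ (Q - 1) = 1}"
  proof -
    have "x ^ Q = x \<longleftrightarrow> x = 0 \<or> x ^ (Q - 1) = 1" for x :: 'a
      using \<open>1 < Q\<close> mult_cancel_left2[of x "x ^ (Q - 1)"] power_eq_if[of x Q] by auto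
    then show ?thesis by auto
  qed
  moreover have "0 \<notin> {x::'a. x ^ (Q - 1) = 1}" using \<open>1 < Q\<close> by (simp add: zero_power)
  ultimately show ?thesis using card_units \<open>1 < Q\<close> by simp
qed

lemma card_subfield_of:
  assumes "CARD('a::{finite,field}) = q ^ n" "0 < n" "d dvd n"
  shows "card (subfield_of q d :: 'a set) = q ^ d"
proof -
  obtain k where n: "n = d * k" using assms(3) by blast
  then have "CARD('a) = (q ^ d) ^ k" "0 < k" using assms(1,2) by (auto simp: power_mult)
  then show ?thesis unfolding subfield_of_def by (rule card_power_fixed_points)
qed

lemma subfield_eq_subfield_of:
  assumes "CARD('a::{finite,field}) = q ^ n" "0 < n" "d dvd n"
    and T: "is_subfield T" "card T = q ^ d"
  shows "T = (subfield_of q d :: 'a set)"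
proof (rule card_subset_eq)
  have "0 < q" using one_less_base_if_CARD_eq_power[OF assms(1,2)] by simp
  show "T \<subseteq> subfield_of q d"
  proof
    fix y assume y: "y \<in> T"
    show "y \<in> subfield_of q d"
    proof (cases "y = 0")
      case True then show ?thesis using \<open>0 < q\<close> by (simp add: subfield_of_def zero_power)
    next
      case False
      have "y ^ card (T - {0}) = 1"
        using T(1) y False by (intro power_card_eq_1_if_mult_closed) (auto simp: is_subfield_def)
      moreover have "card (T - {0}) = q ^ d - 1"
        using T by (simp add: card_Diff_singleton is_subfield_def)
      ultimately have "y * y ^ (q ^ d - 1) = y" by simp
      then show ?thesis using \<open>0 < q\<close> by (simp add: subfield_of_def power_eq_if[of y "q ^ d"])
    qed
  qed
  show "card T = card (subfield_of q d :: 'a set)"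
    using card_subfield_of[OF assms(1-3)] T(2) by simp
qed simp

lemma card_subspace_subfield_of:
  assumes "prime_power q" "CARD('a::{finite,field}) = q ^ n" "0 < n" "m dvd n"
    and "is_subspace (subfield_of q m) (W :: 'a set)"
  shows "card W = q ^ (m * dim_over (subfield_of q m) W)"
  using card_eq_card_power_dim_over[OF is_subfield_subfield_of[OF assms(1,2)] assms(5)]
    card_subfield_of[OF assms(2-4)]
  by (simp add: power_mult)

lemma dim_over_subfield_of_1:
  assumes "prime_power q" "CARD('a::{finite,field}) = q ^ n" "0 < n" "m dvd n"
    and W: "is_subspace (subfield_of q m) (W :: 'a set)"
  shows "dim_over (subfield_of q 1) W = m * dim_over (subfield_of q m) W"
proof -
  have "is_subspace (subfield_of q 1) W"
    using W subfield_of_1_subset by (rule is_subspace_subfield_mono)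
  then have "q ^ dim_over (subfield_of q 1) W = card W"
    using card_subspace_subfield_of[OF assms(1-3) one_dvd] by simp
  also have "\<dots> = q ^ (m * dim_over (subfield_of q m) W)"
    using card_subspace_subfield_of[OF assms] .
  finally show ?thesis using one_less_base_if_CARD_eq_power[OF assms(2,3)] by simp
qed

lemma dim_over_subfield_of_UNIV:
  assumes "prime_power q" "CARD('a::{finite,field}) = q ^ n" "0 < n" "m dvd n"
  shows "dim_over (subfield_of q m) (UNIV :: 'a set) = n div m"
proof -
  have "q ^ n = q ^ (m * dim_over (subfield_of q m) (UNIV :: 'a set))"
    using card_subspace_subfield_of[OF assms, of UNIV] assms(2) by (simp add: is_subspace_def)
  then have "n = m * dim_over (subfield_of q m) (UNIV :: 'a set)"
    using one_less_base_if_CARD_eq_power[OF assms(2,3)] by simp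
  moreover have "0 < m" using assms(3,4) by (auto intro: Nat.gr0I)
  ultimately show ?thesis by simp
qed

section \<open>The stabilizer of a flag\<close>

definition stabilizer :: "'a::field set list \<Rightarrow> 'a set" where
  "stabilizer F = {y. \<forall>U\<in>set F. \<forall>u\<in>U. y * u \<in> U}"

lemma subfield_subset_stabilizer:
  "\<forall>U\<in>set F. is_subspace K U \<Longrightarrow> K \<subseteq> stabilizer F"
  unfolding stabilizer_def is_subspace_def by blast

lemma is_subspace_stabilizer:
  "is_subspace K U \<Longrightarrow> U \<in> set F \<Longrightarrow> is_subspace (stabilizer F) U"
  unfolding stabilizer_def is_subspace_def by blast

lemma stabilizer_power: "\<beta> \<in> stabilizer F \<Longrightarrow> \<beta> ^ j \<in> stabilizer F"
  by (induction j) (auto simp: stabilizer_def mult.assoc)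

lemma is_subfield_stabilizer:
  fixes F :: "'a::{finite,field} set list"
  assumes K: "is_subfield K" and F: "\<forall>U\<in>set F. is_subspace K U"
  shows "is_subfield (stabilizer F)"
  unfolding is_subfield_def
proof (intro conjI ballI impI)
  show "0 \<in> stabilizer F" "1 \<in> stabilizer F"
    using F by (auto simp: stabilizer_def is_subspace_def)
  fix a assume a: "a \<in> stabilizer F"
  show "- a \<in> stabilizer F"
    using a F is_subspace_uminus[OF K] by (fastforce simp: stabilizer_def)
  show "inverse a \<in> stabilizer F" if "a \<noteq> 0"
    unfolding stabilizer_def
  proof (intro CollectI ballI)
    fix U u assume U: "U \<in> set F" and u: "u \<in> U"
    have "(*) a ` U = U"
      using a U \<open>a \<noteq> 0\<close> by (intro endo_inj_surj) (auto simp: stabilizer_def inj_on_def)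
    then obtain v where "v \<in> U" "u = a * v" using u by force
    then show "inverse a * u \<in> U" using \<open>a \<noteq> 0\<close> by (simp add: mult.assoc[symmetric])
  qed
  fix b assume b: "b \<in> stabilizer F"
  show "a * b \<in> stabilizer F" using a b by (simp add: stabilizer_def mult.assoc)
  show "a + b \<in> stabilizer F"
    using a b F by (auto simp: stabilizer_def is_subspace_def distrib_right)
qed

lemma stabilizer_best_friend:
  assumes q: "prime_power q" and card: "CARD('a::{finite,field}) = q ^ n" and n: "0 < n"
    and bf: "is_best_friend q n m F"
  shows "stabilizer F = (subfield_of q m :: 'a set)"
proof -
  let ?K = "subfield_of q m :: 'a set" and ?T = "stabilizer F"
  have m: "m dvd n" and F: "\<forall>U\<in>set F. is_subspace ?K U"
    using bf by (auto simp: is_best_friend_def is_friend_def in_set_conv_nth)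
  have K: "is_subfield ?K" using q card by (rule is_subfield_subfield_of)
  have KT: "?K \<subseteq> ?T" using F by (rule subfield_subset_stabilizer)
  have T: "is_subfield ?T" using K F by (rule is_subfield_stabilizer)
  have "is_subspace ?K ?T" using T KT by (auto simp: is_subspace_def is_subfield_def)
  then have card_T: "card ?T = q ^ (m * dim_over ?K ?T)"
    using card_subspace_subfield_of[OF q card n m] by simp
  have "q ^ n = card ?T ^ dim_over ?T (UNIV :: 'a set)"
    using card_eq_card_power_dim_over[OF T, of UNIV] card
    by (simp add: is_subspace_def is_subfield_def)
  then have "n = m * dim_over ?K ?T * dim_over ?T (UNIV :: 'a set)"
    using card_T one_less_base_if_CARD_eq_power[OF card n] by (simp add: power_mult[symmetric])
  then have d: "m * dim_over ?K ?T dvd n" by simp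
  \<comment> \<open>the stabilizer is itself a friend, so it cannot be larger than the best friend\<close>
  have "?T = subfield_of q (m * dim_over ?K ?T)"
    using subfield_eq_subfield_of[OF card n d T card_T] .
  then have "is_friend q n (m * dim_over ?K ?T) F"
    using F d is_subspace_stabilizer unfolding is_friend_def by (metis nth_mem)
  then have "m * dim_over ?K ?T \<le> m" using bf by (simp add: is_best_friend_def)
  then have "card ?T \<le> card ?K"
    using card_T card_subfield_of[OF card n m] one_less_base_if_CARD_eq_power[OF card n] by simp
  then have "?K = ?T" using KT by (intro card_seteq) auto
  then show ?thesis by simp
qed

section \<open>Distances between flags of the same type\<close>

lemma subspace_dist_bounds:
  assumes q: "prime_power q" and card: "CARD('a::{finite,field}) = q ^ n" and n: "0 < n"
    and m: "m dvd n"
    and U: "is_subspace (subfield_of q m) (U :: 'a set)" "dim_over (subfield_of q m) U = a"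
    and V: "is_subspace (subfield_of q m) V" "dim_over (subfield_of q m) V = a"
  obtains t where "subspace_dist q U V = 2 * m * t" "t \<le> a" "t \<le> n div m - a"
    and "U \<noteq> V \<Longrightarrow> 1 \<le> t"
proof -
  let ?K = "subfield_of q m :: 'a set"
  let ?dim = "dim_over ?K"
  have K: "is_subfield ?K" using q card by (rule is_subfield_subfield_of)
  have plus_UV: "is_subspace ?K (set_plus U V)" using U V by (simp add: is_subspace_set_plus)
  have Int_UV: "is_subspace ?K (U \<inter> V)" using U V by (simp add: is_subspace_Int)
  have dims: "?dim (set_plus U V) + ?dim (U \<inter> V) = 2 * a"
    using dim_over_set_plus_Int[OF K U(1) V(1)] U(2) V(2) by simp
  have "subspace_dist q U V = m * (?dim (set_plus U V) - ?dim (U \<inter> V))"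
    unfolding subspace_dist_def
    using dim_over_subfield_of_1[OF q card n m plus_UV] dim_over_subfield_of_1[OF q card n m Int_UV]
    by (simp add: diff_mult_distrib2)
  moreover have "?dim (set_plus U V) - ?dim (U \<inter> V) = 2 * (a - ?dim (U \<inter> V))"
    using dims by linarith
  ultimately have dist: "subspace_dist q U V = 2 * m * (a - ?dim (U \<inter> V))" by simp
  have "?dim (set_plus U V) \<le> ?dim (UNIV :: 'a set)"
    using dim_over_le_iff_card_le[OF K plus_UV] by (simp add: is_subspace_def card_mono)
  then have upper: "a - ?dim (U \<inter> V) \<le> n div m - a"
    using dims dim_over_subfield_of_UNIV[OF q card n m] by linarith
  have proper: "?dim (U \<inter> V) < a" if "U \<noteq> V"
  proof (rule ccontr)
    assume "\<not> ?dim (U \<inter> V) < a"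
    then have "card U \<le> card (U \<inter> V)" "card V \<le> card (U \<inter> V)"
      using dim_over_le_iff_card_le[OF K U(1) Int_UV] dim_over_le_iff_card_le[OF K V(1) Int_UV] U V
      by auto
    then have "U \<inter> V = U" "U \<inter> V = V"
      using card_seteq[of _ "U \<inter> V"] by (metis finite Int_lower1 Int_lower2)+
    then show False using that by simp
  qed
  show ?thesis
  proof (rule that[OF dist _ upper])
    show "a - ?dim (U \<inter> V) \<le> a" by simp
    show "1 \<le> a - ?dim (U \<inter> V)" if "U \<noteq> V" using proper[OF that] by simp
  qed
qed

definition has_dims_over :: "'a::field set \<Rightarrow> nat list \<Rightarrow> 'a set list \<Rightarrow> bool" where
  "has_dims_over K ds G \<longleftrightarrow> length G = length ds \<and>
     (\<forall>i<length ds. is_subspace K (G ! i) \<and> dim_over K (G ! i) = ds ! i)"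

lemma flag_dist_bounds:
  assumes q: "prime_power q" and card: "CARD('a::{finite,field}) = q ^ n" and n: "0 < n"
    and m: "m dvd n"
    and G: "has_dims_over (subfield_of q m) ds (G :: 'a set list)"
    and G': "has_dims_over (subfield_of q m) ds G'"
  shows "2 * m dvd flag_dist q G G'"
    and "flag_dist q G G'
           \<le> 2 * m * (\<Sum>i<length ds. if ds ! i \<le> n div m div 2 then ds ! i else n div m - ds ! i)"
    and "G \<noteq> G' \<Longrightarrow> 2 * m \<le> flag_dist q G G'"
proof -
  let ?bound = "\<lambda>i. if ds ! i \<le> n div m div 2 then ds ! i else n div m - ds ! i"
  have "\<forall>i<length ds. \<exists>t. subspace_dist q (G ! i) (G' ! i) = 2 * m * t \<and> t \<le> ?bound i
          \<and> (G ! i \<noteq> G' ! i \<longrightarrow> 1 \<le> t)"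
  proof (intro allI impI)
    fix i assume "i < length ds"
    then obtain t where "subspace_dist q (G ! i) (G' ! i) = 2 * m * t" "t \<le> ds ! i"
        "t \<le> n div m - ds ! i" "G ! i \<noteq> G' ! i \<Longrightarrow> 1 \<le> t"
      using subspace_dist_bounds[OF q card n m] G G' unfolding has_dims_over_def by metis
    then show "\<exists>t. subspace_dist q (G ! i) (G' ! i) = 2 * m * t \<and> t \<le> ?bound i
          \<and> (G ! i \<noteq> G' ! i \<longrightarrow> 1 \<le> t)" by auto
  qed
  then obtain t where t: "\<And>i. i < length ds \<Longrightarrow> subspace_dist q (G ! i) (G' ! i) = 2 * m * t i
      \<and> t i \<le> ?bound i \<and> (G ! i \<noteq> G' ! i \<longrightarrow> 1 \<le> t i)"
    by metis
  have dist: "flag_dist q G G' = 2 * m * (\<Sum>i<length ds. t i)"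
    using G t by (simp add: flag_dist_def has_dims_over_def sum_distrib_left)
  then show "2 * m dvd flag_dist q G G'" by simp
  have "(\<Sum>i<length ds. t i) \<le> (\<Sum>i<length ds. ?bound i)"
    using t by (intro sum_mono) auto
  then show "flag_dist q G G' \<le> 2 * m * (\<Sum>i<length ds. ?bound i)" using dist by simp
  assume "G \<noteq> G'"
  have "1 \<le> (\<Sum>i<length ds. t i)"
  proof -
    obtain i where i: "i < length ds" "G ! i \<noteq> G' ! i"
      using G G' \<open>G \<noteq> G'\<close> nth_equalityI unfolding has_dims_over_def by metis
    then have "1 \<le> t i" using t by blast
    also have "t i \<le> (\<Sum>i<length ds. t i)" using i by (intro member_le_sum) auto
    finally show ?thesis .
  qed
  then show "2 * m \<le> flag_dist q G G'" using dist by simp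
qed

lemma
  assumes "finite C" "a \<in> C" "b \<in> C" "a \<noteq> b"
  shows min_flag_dist_le: "min_flag_dist q C \<le> flag_dist q a b"
    and min_flag_dist_attained:
      "\<exists>x\<in>C. \<exists>y\<in>C. x \<noteq> y \<and> min_flag_dist q C = flag_dist q x y"
proof -
  let ?D = "{flag_dist q x y | x y. x \<in> C \<and> y \<in> C \<and> x \<noteq> y}"
  have "?D \<subseteq> (\<lambda>(x, y). flag_dist q x y) ` (C \<times> C)" by auto
  then have "finite ?D" by (rule finite_subset) (simp add: assms(1))
  moreover have "flag_dist q a b \<in> ?D" using assms by blast
  moreover have "min_flag_dist q C = Min ?D" using assms by (auto simp: min_flag_dist_def)
  ultimately show "min_flag_dist q C \<le> flag_dist q a b"
    and "\<exists>x\<in>C. \<exists>y\<in>C. x \<noteq> y \<and> min_flag_dist q C = flag_dist q x y"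
    using Min_in[of ?D] by auto
qed

lemma min_flag_dist_bounds:
  assumes q: "prime_power q" and card: "CARD('a::{finite,field}) = q ^ n" and n: "0 < n"
    and m: "m dvd n"
    and C: "finite C" "\<forall>G\<in>C. has_dims_over (subfield_of q m) ds (G :: 'a set list)"
    and ab: "a \<in> C" "b \<in> C" "a \<noteq> b"
  shows "2 * m dvd min_flag_dist q C" and "2 * m \<le> min_flag_dist q C"
    and "min_flag_dist q C
           \<le> 2 * m * (\<Sum>i<length ds. if ds ! i \<le> n div m div 2 then ds ! i else n div m - ds ! i)"
proof -
  note bounds = flag_dist_bounds[OF q card n m C(2)[rule_format] C(2)[rule_format]]
  obtain G G' where G: "G \<in> C" "G' \<in> C" "G \<noteq> G'" and min: "min_flag_dist q C = flag_dist q G G'"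
    using min_flag_dist_attained[OF C(1) ab] by blast
  show "2 * m dvd min_flag_dist q C" "2 * m \<le> min_flag_dist q C"
    using min bounds(1,3)[OF G(1,2)] G(3) by simp_all
  show "min_flag_dist q C
      \<le> 2 * m * (\<Sum>i<length ds. if ds ! i \<le> n div m div 2 then ds ! i else n div m - ds ! i)"
    using min_flag_dist_le[OF C(1) ab] bounds(2)[OF ab(1,2)] by (rule order_trans)
qed

lemma has_dims_over_best_friend:
  assumes q: "prime_power q" and card: "CARD('a::{finite,field}) = q ^ n" and n: "0 < n"
    and flag: "is_flag q (map (\<lambda>x. m * x) sl) (F :: 'a set list)"
    and bf: "is_best_friend q n m F"
  shows "has_dims_over (subfield_of q m) sl F"
  unfolding has_dims_over_def
proof (intro conjI allI impI)
  show len: "length F = length sl" using flag by (simp add: is_flag_def)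
  have m: "m dvd n" using bf by (simp add: is_best_friend_def is_friend_def)
  then have "0 < m" using n by (auto intro: Nat.gr0I)
  fix i assume "i < length sl"
  then show K: "is_subspace (subfield_of q m) (F ! i)"
    using bf len by (simp add: is_best_friend_def is_friend_def)
  have "dim_over (subfield_of q 1) (F ! i) = m * sl ! i"
    using flag \<open>i < length sl\<close> len by (simp add: is_flag_def)
  then show "dim_over (subfield_of q m) (F ! i) = sl ! i"
    using dim_over_subfield_of_1[OF q card n m K] \<open>0 < m\<close> by simp
qed

section \<open>Orbits\<close>

definition scale_flag :: "'a::field \<Rightarrow> 'a set list \<Rightarrow> 'a set list" where
  "scale_flag c F = map (\<lambda>U. (\<lambda>u. u * c) ` U) F"

lemma orbit_eq_image: "orbit \<beta> F = (\<lambda>j. scale_flag (\<beta> ^ j) F) ` {..mult_order \<beta> - 1}"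
  unfolding orbit_def scale_flag_def by auto

lemma scale_flag_1 [simp]: "scale_flag 1 F = F"
  by (simp add: scale_flag_def)

lemma has_dims_over_scale_flag:
  fixes c :: "'a::{finite,field}"
  assumes K: "is_subfield K" and F: "has_dims_over K ds F" and c: "c \<noteq> 0"
  shows "has_dims_over K ds (scale_flag c F)"
  unfolding has_dims_over_def
proof (intro conjI allI impI)
  show "length (scale_flag c F) = length ds" using F by (simp add: scale_flag_def has_dims_over_def)
  fix i assume i: "i < length ds"
  then have U: "is_subspace K (F ! i)" and "i < length F" using F by (auto simp: has_dims_over_def)
  then have U': "is_subspace K (scale_flag c F ! i)" and
    "card (scale_flag c F ! i) = card (F ! i)"
    using c by (auto simp: scale_flag_def is_subspace_scale card_image inj_on_def)
  then have "dim_over K (scale_flag c F ! i) = dim_over K (F ! i)"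
    using dim_over_le_iff_card_le[OF K U U'] dim_over_le_iff_card_le[OF K U' U] by simp
  then show "dim_over K (scale_flag c F ! i) = ds ! i" using F i by (simp add: has_dims_over_def)
  show "is_subspace K (scale_flag c F ! i)" by (rule U')
qed

lemma scale_flag_eq_self_iff:
  fixes c :: "'a::{finite,field}"
  assumes "c \<noteq> 0"
  shows "scale_flag c F = F \<longleftrightarrow> c \<in> stabilizer F"
proof
  assume eq: "scale_flag c F = F"
  show "c \<in> stabilizer F" unfolding stabilizer_def
  proof (intro CollectI ballI)
    fix U u assume "U \<in> set F" "u \<in> U"
    then obtain i where i: "i < length F" "U = F ! i" by (auto simp: in_set_conv_nth)
    have "scale_flag c F ! i = F ! i" using eq by simp
    then have "(\<lambda>u. u * c) ` U = U" using i by (simp add: scale_flag_def)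
    then show "c * u \<in> U" using \<open>u \<in> U\<close> by (metis imageI mult.commute)
  qed
next
  assume c: "c \<in> stabilizer F"
  have "(\<lambda>u. u * c) ` U = U" if "U \<in> set F" for U
  proof (rule endo_inj_surj)
    show "(\<lambda>u. u * c) ` U \<subseteq> U" using c that by (auto simp: stabilizer_def mult.commute)
  qed (use assms in \<open>auto simp: inj_on_def\<close>)
  then show "scale_flag c F = F" unfolding scale_flag_def by (simp add: map_idI)
qed

lemma orbit_eq_singleton:
  fixes \<beta> :: "'a::{finite,field}"
  assumes "\<beta> \<noteq> 0" "\<beta> \<in> stabilizer F"
  shows "orbit \<beta> F = {F}"
proof -
  have "scale_flag (\<beta> ^ j) F = F" for j
    using scale_flag_eq_self_iff[of "\<beta> ^ j" F] stabilizer_power[OF assms(2)] assms(1) by simp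
  then have "orbit \<beta> F = (\<lambda>j. F) ` {..mult_order \<beta> - 1}" unfolding orbit_eq_image by simp
  then show ?thesis by auto
qed

lemma mult_order_ge_2:
  fixes \<beta> :: "'a::{finite,field}"
  assumes "\<beta> \<noteq> 0" "\<beta> \<noteq> 1"
  shows "2 \<le> mult_order \<beta>"
proof -
  have "0 < CARD('a) - 1 \<and> \<beta> ^ (CARD('a) - 1) = 1"
    using power_CARD_minus_1[OF assms(1)] CARD_field_ge_2[where 'a = 'a] by simp
  then have ord: "0 < mult_order \<beta> \<and> \<beta> ^ mult_order \<beta> = 1"
    unfolding mult_order_def by (rule LeastI)
  then have "mult_order \<beta> \<noteq> 1" using assms(2) by auto
  then show ?thesis using ord by linarith
qed

lemma self_and_scale_flag_in_orbit:
  fixes \<beta> :: "'a::{finite,field}"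
  assumes "\<beta> \<noteq> 0" "\<beta> \<noteq> 1"
  shows "F \<in> orbit \<beta> F" "scale_flag \<beta> F \<in> orbit \<beta> F"
  using mult_order_ge_2[OF assms] unfolding orbit_eq_image
  by (force intro: image_eqI[where x = 0], force intro: image_eqI[where x = 1])

theorem proposition4p4:
  fixes q n m :: nat and sl :: "nat list" and F :: "('a::{finite,field}) set list" and \<beta> :: 'a
  assumes q: "prime_power q"
    and card: "card (UNIV :: 'a set) = q ^ n"
    and n: "n \<ge> 1"
    and mn: "m dvd n"
    and s_bounds: "\<forall>i < length sl. 1 \<le> sl ! i \<and> sl ! i < n div m"
    and s_sorted: "sorted_wrt (<) sl"
    and flag: "is_flag q (map (\<lambda>x. m * x) sl) F"
    and bf: "is_best_friend q n m F"
    and beta: "\<beta> \<noteq> 0"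
  shows "(min_flag_dist q (orbit \<beta> F) = 0 \<longleftrightarrow> \<beta> \<in> subfield_of q m)
       \<and> (\<beta> \<notin> subfield_of q m \<longrightarrow>
           2 * m dvd min_flag_dist q (orbit \<beta> F)
         \<and> 2 * m \<le> min_flag_dist q (orbit \<beta> F)
         \<and> min_flag_dist q (orbit \<beta> F) \<le>
             2 * m * (\<Sum>i < length sl. if sl ! i \<le> (n div m) div 2 then sl ! i else n div m - sl ! i))"
proof -
  let ?K = "subfield_of q m :: 'a set"
  have n_pos: "0 < n" using n by simp
  have stab: "stabilizer F = ?K" using q card n_pos bf by (rule stabilizer_best_friend)
  have F: "has_dims_over ?K sl F" using q card n_pos flag bf by (rule has_dims_over_best_friend)
  have orbit: "\<forall>G\<in>orbit \<beta> F. has_dims_over ?K sl G"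
    using has_dims_over_scale_flag[OF is_subfield_subfield_of[OF q card] F] beta
    by (auto simp: orbit_eq_image)
  show ?thesis
  proof (cases "\<beta> \<in> ?K")
    case True
    then show ?thesis using orbit_eq_singleton[OF beta] stab by (simp add: min_flag_dist_def)
  next
    case False
    then have "\<beta> \<noteq> 1" "scale_flag \<beta> F \<noteq> F"
      using is_subfield_subfield_of[OF q card] scale_flag_eq_self_iff[OF beta] stab
      by (auto simp: is_subfield_def)
    moreover have "0 < m" using mn n_pos by (auto intro: Nat.gr0I)
    ultimately show ?thesis
      using min_flag_dist_bounds[OF q card n_pos mn _ orbit self_and_scale_flag_in_orbit[OF beta]] False
      by (auto simp: orbit_eq_image)
  qed
qed

end
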